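(* In the two-tier residency matching game described in the context with $v\ge e/(e-1)$, consider the variant in which high-tier doctors submit lists of length $K\ge 1$ and low-tier doctors submit lists of length $1$. Under the large market approximation, the social welfare of the symmetric equilibrium of this variant is at least $\frac{e}{2(e-1)}$ times the social welfare of SIMPLE.
   Context: Model: there are $n$ high-tier and $rn$ low-tier doctors ($r>0$), and $n$ high-tier and $rn$ low-tier hospitals, each with one position. Every hospital prefers every high doctor to every low doctor and every doctor prefers every high hospital to every low hospital; within a tier, preferences are independent uniformly random permutations. Each doctor submits a ranked list of hospitals of the allowed length $L$: a strategy $(k,L-k)$ lists his $k$ most preferred high hospitals followed by his $L-k$ most preferred low hospitals. Hospitals submit full true rankings; doctor-proposing deferred acceptance is run. Values: a doctor gets $v>1$ if matched to a high hospital, $1$ if matched to a low one, $0$ if unmatched; a hospital gets $v$ from a high doctor, $1$ from a low doctor, $0$ if unfilled; social welfare is the sum of all agents' values. Large market approximation: $n\to\infty$ with $r,K,v$ fixed; each application is accepted independently with a probability determined by the aggregate strategy profile via fixed-point equations (expected matched doctors = expected hospitals receiving at least one admissible application; a hospital receiving on average $\lambda$ applications gets none with probability $e^{-\lambda}$; low doctors' applications to hospitals already taken by high doctors are rejected). Equilibrium: symmetric Nash equilibrium (all doctors of a tier use the same, possibly mixed, strategy, each maximizing expected value given the acceptance probabilities). SIMPLE: the outcome when every doctor submits a single application to his most preferred hospital in his own tier; its welfare is $2(v+r)n(1-1/e)$. *)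

theory Defs
  imports "HOL-Analysis.Analysis"
begin

text \<open>Large market approximation of the two-tier residency matching game, variant in which
  high-tier doctors submit lists of length K and low-tier doctors lists of length 1.
  All quantities are per n (there are n high doctors/hospitals and r*n low ones).\<close>

text \<open>Acceptance probability when a hospital receives on average x applications:
  fraction of hospitals receiving at least one application, (1 - e^{-x}), divided by the
  average number of applications x (limit value 1 at x = 0).\<close>
definition accept :: "real \<Rightarrow> real" where
  "accept x = (if x = 0 then 1 else (1 - exp (- x)) / x)"

text \<open>Expected number of applications a doctor sends among m listed hospitals of a tier,
  each accepted independently with probability p (he stops at the first acceptance).\<close>
definition napps :: "real \<Rightarrow> nat \<Rightarrow> real" where
  "napps p m = (\<Sum>j<m. (1 - p) ^ j)"

text \<open>Average number of applications per high hospital from high doctors, when a high doctor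
  plays (k, K-k) with probability sigma k and high-tier applications are accepted w.p. pH.\<close>
definition lamH :: "nat \<Rightarrow> (nat \<Rightarrow> real) \<Rightarrow> real \<Rightarrow> real" where
  "lamH K \<sigma> pH = (\<Sum>k\<le>K. \<sigma> k * napps pH k)"

text \<open>Average number of applications per low hospital from high doctors (rejected in the high
  tier), with r n low hospitals and low-tier acceptance probability pL.\<close>
definition muL :: "real \<Rightarrow> nat \<Rightarrow> (nat \<Rightarrow> real) \<Rightarrow> real \<Rightarrow> real \<Rightarrow> real" where
  "muL r K \<sigma> pH pL = (\<Sum>k\<le>K. \<sigma> k * (1 - pH) ^ k * napps pL (K - k)) / r"

definition UH :: "real \<Rightarrow> nat \<Rightarrow> real \<Rightarrow> real \<Rightarrow> nat \<Rightarrow> real" where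
  "UH v K pH pL k = v * (1 - (1 - pH) ^ k) + (1 - pH) ^ k * (1 - (1 - pL) ^ (K - k))"

text \<open>Low doctors play (1,0) (apply to top high hospital) w.p. q and (0,1) w.p. 1-q.
  A low doctor's application to a high hospital is admissible only if the hospital is not taken
  by a high doctor (probability e^{-lamH}); untaken high hospitals receive on average q r low
  applications. Low hospitals untaken by high doctors (probability e^{-muL}) receive on average
  1 - q low applications.\<close>
definition accLH :: "real \<Rightarrow> real \<Rightarrow> real \<Rightarrow> real" where
  "accLH r lam q = exp (- lam) * accept (q * r)"

definition accLL :: "real \<Rightarrow> real \<Rightarrow> real" where
  "accLL mu q = exp (- mu) * accept (1 - q)"

definition is_equilibrium ::
  "real \<Rightarrow> real \<Rightarrow> nat \<Rightarrow> (nat \<Rightarrow> real) \<Rightarrow> real \<Rightarrow> real \<Rightarrow> real \<Rightarrow> bool" where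
  "is_equilibrium r v K \<sigma> q pH pL \<longleftrightarrow>
     (\<forall>k\<le>K. 0 \<le> \<sigma> k) \<and> (\<Sum>k\<le>K. \<sigma> k) = 1 \<and> 0 \<le> q \<and> q \<le> 1 \<and>
     0 < pH \<and> pH \<le> 1 \<and> 0 < pL \<and> pL \<le> 1 \<and>
     pH = accept (lamH K \<sigma> pH) \<and>
     pL = accept (muL r K \<sigma> pH pL) \<and>
     (\<forall>k\<le>K. 0 < \<sigma> k \<longrightarrow> (\<forall>k'\<le>K. UH v K pH pL k' \<le> UH v K pH pL k)) \<and>
     (0 < q \<longrightarrow> accLL (muL r K \<sigma> pH pL) q \<le> v * accLH r (lamH K \<sigma> pH) q) \<and>
     (q < 1 \<longrightarrow> v * accLH r (lamH K \<sigma> pH) q \<le> accLL (muL r K \<sigma> pH pL) q)"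

text \<open>Social welfare (sum of all agents' values) in the large-market approximation.
  High-high match: 2v; low doctor in high hospital or high doctor in low hospital: v + 1;
  low-low match: 2.\<close>
definition welfare ::
  "nat \<Rightarrow> real \<Rightarrow> real \<Rightarrow> nat \<Rightarrow> (nat \<Rightarrow> real) \<Rightarrow> real \<Rightarrow> real \<Rightarrow> real \<Rightarrow> real" where
  "welfare n r v K \<sigma> q pH pL =
     (let lam = lamH K \<sigma> pH; mu = muL r K \<sigma> pH pL in
      real n * (2 * v * (1 - exp (- lam))
              + (v + 1) * (exp (- lam) * (1 - exp (- (q * r))))
              + (v + 1) * (r * (1 - exp (- mu)))
              + 2 * (r * exp (- mu) * (1 - exp (- (1 - q))))))"

definition simple_welfare :: "nat \<Rightarrow> real \<Rightarrow> real \<Rightarrow> real" where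
  "simple_welfare n r v = 2 * (v + r) * real n * (1 - 1 / exp 1)"

end

theory Submission
  imports Defs
begin

text \<open>If high-tier acceptance exceeded 1 - 1/e, then v \<ge> e/(e-1) would make one high-tier
  application worth more than 1, the most a high doctor can get in the low tier; so nobody would
  play (0, K), every high doctor would send at least one high application and the load lam on high
  hospitals would be at least 1. As acceptance at load lam is (1 - e^{-lam})/lam > 1 - 1/e for
  lam < 1, equilibrium forces lam \<ge> 1. Then at most a fraction 1/e < 1/2 of high hospitals stay
  free of high doctors, which secures welfare v n; the low doctors' indifference between the tiers
  and (1 - e^{-s})(1 + s) \<ge> s secure another r n, and v + r = e/(2(e-1)) \<cdot> 2(v + r)(1 - 1/e).\<close>

lemma exp_gt_add_one_self:
  fixes x :: real
  assumes "x \<noteq> 0"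
  shows "1 + x < exp x"
proof (cases "1 + x \<le> 0")
  case False
  then have "ln (1 + x) < (1 + x) - 1"
    using assms ln_le_minus_one[of "1 + x"] ln_eq_minus_one[of "1 + x"] by fastforce
  then show ?thesis
    using False by (metis add_diff_cancel_left' exp_less_cancel_iff exp_ln not_le)
qed (use exp_gt_zero[of x] in linarith)

lemma accept_nonneg: "0 \<le> x \<Longrightarrow> 0 \<le> accept x"
  unfolding accept_def by (auto simp: divide_nonneg_pos)

lemma one_minus_exp_minus_eq_mult_accept: "0 \<le> x \<Longrightarrow> 1 - exp (- x) = x * accept x"
  unfolding accept_def by auto

lemma accept_mult_one_plus_ge_1:
  assumes "0 \<le> x"
  shows "1 \<le> accept x * (1 + x)"
proof (cases "x = 0")
  case False
  have "exp (- x) * (1 + x) \<le> exp (- x) * exp x"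
    using exp_ge_add_one_self[of x] by simp
  then have "x \<le> (1 - exp (- x)) * (1 + x)"
    by (simp add: exp_minus_inverse algebra_simps)
  then show ?thesis
    using assms False by (simp add: accept_def field_simps)
qed (simp add: accept_def)

text \<open>Strict convexity of t \<mapsto> e^{-t} on [0, 1], written as
  e^{-x} = (1 - x) e^{-x}(1 + x) + x e^{-x} x with both tangent-line bounds strict.\<close>

lemma accept_gt_one_minus_exp_minus_1:
  assumes "0 \<le> x" "x < 1"
  shows "1 - exp (- 1) < accept x"
proof (cases "x = 0")
  case False
  then have x: "0 < x" using assms by simp
  have at_0: "exp (- x) * (1 + x) < 1"
    using exp_gt_add_one_self[of x] x by (simp add: exp_minus field_simps)
  have at_1: "exp (- x) * x < exp (- 1)"
  proof -
    have "x < exp (x - 1)"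
      using exp_gt_add_one_self[of "x - 1"] assms by simp
    then show ?thesis
      by (simp add: exp_diff exp_minus field_simps)
  qed
  have "exp (- x) = (1 - x) * (exp (- x) * (1 + x)) + x * (exp (- x) * x)"
    by (simp add: algebra_simps)
  also have "\<dots> < (1 - x) * 1 + x * exp (- 1)"
    using at_0 at_1 assms x
    by (intro add_less_le_mono mult_strict_left_mono mult_left_mono) auto
  finally have "x * (1 - exp (- 1)) < 1 - exp (- x)"
    by (simp add: algebra_simps)
  then show ?thesis
    using x by (simp add: accept_def field_simps)
qed (simp add: accept_def)

lemma napps_nonneg: "0 \<le> p \<Longrightarrow> p \<le> 1 \<Longrightarrow> 0 \<le> napps p m"
  unfolding napps_def by (intro sum_nonneg) auto

lemma napps_ge_1:
  assumes "0 \<le> p" "p \<le> 1" "1 \<le> m"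
  shows "1 \<le> napps p m"
proof -
  have "napps p m = (1 - p) ^ 0 + (\<Sum>j\<in>{..<m} - {0}. (1 - p) ^ j)"
    unfolding napps_def using assms(3) by (subst sum.remove[of _ 0]) auto
  moreover have "0 \<le> (\<Sum>j\<in>{..<m} - {0}. (1 - p) ^ j)"
    using assms by (intro sum_nonneg) auto
  ultimately show ?thesis by simp
qed

lemma lamH_nonneg:
  assumes "\<forall>k\<le>K. 0 \<le> \<sigma> k" "0 \<le> pH" "pH \<le> 1"
  shows "0 \<le> lamH K \<sigma> pH"
  unfolding lamH_def using assms by (intro sum_nonneg mult_nonneg_nonneg napps_nonneg) auto

lemma muL_nonneg:
  assumes "0 < r" "\<forall>k\<le>K. 0 \<le> \<sigma> k" "0 \<le> pH" "pH \<le> 1" "0 \<le> pL" "pL \<le> 1"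
  shows "0 \<le> muL r K \<sigma> pH pL"
  unfolding muL_def using assms
  by (intro divide_nonneg_pos sum_nonneg mult_nonneg_nonneg napps_nonneg) auto

lemma sum_le_lamH:
  assumes "\<forall>k\<le>K. 0 \<le> \<sigma> k" "\<sigma> 0 = 0" "0 \<le> pH" "pH \<le> 1"
  shows "(\<Sum>k\<le>K. \<sigma> k) \<le> lamH K \<sigma> pH"
  unfolding lamH_def
proof (rule sum_mono)
  fix k assume "k \<in> {..K}"
  then show "\<sigma> k \<le> \<sigma> k * napps pH k"
    using assms napps_ge_1[of pH k] by (cases "k = 0") (auto simp: mult_le_cancel_left1)
qed

lemma UH_0_le_1: "0 \<le> pL \<Longrightarrow> pL \<le> 1 \<Longrightarrow> UH v K pH pL 0 \<le> 1"
  unfolding UH_def by simp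

lemma UH_1_ge:
  assumes "pH \<le> 1" "0 \<le> pL" "pL \<le> 1"
  shows "v * pH \<le> UH v K pH pL 1"
proof -
  have "0 \<le> (1 - pH) * (1 - (1 - pL) ^ (K - 1))"
    using assms by (intro mult_nonneg_nonneg) (auto simp: power_le_one)
  then show ?thesis unfolding UH_def by simp
qed

lemma one_le_exp_ratio: "1 \<le> exp 1 / (exp 1 - 1 :: real)"
  by (simp add: field_simps)

lemma one_le_mult_one_minus_exp_minus_1:
  fixes v :: real
  assumes "exp 1 / (exp 1 - 1) \<le> v"
  shows "1 \<le> v * (1 - exp (- 1))"
proof -
  have "exp 1 / (exp 1 - 1) * (1 - exp (- 1)) = (1::real)"
    by (simp add: exp_minus field_simps)
  moreover have "exp 1 / (exp 1 - 1) * (1 - exp (- 1)) \<le> v * (1 - exp (- 1))"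
    by (rule mult_right_mono[OF assms]) simp
  ultimately show ?thesis by simp
qed

lemma is_equilibrium_lamH_ge_1:
  assumes eq: "is_equilibrium r v K \<sigma> q pH pL"
    and v: "exp 1 / (exp 1 - 1) \<le> v" and K: "1 \<le> K"
  shows "1 \<le> lamH K \<sigma> pH"
proof (rule ccontr)
  let ?lam = "lamH K \<sigma> pH"
  note eq = eq[unfolded is_equilibrium_def]
  assume small: "\<not> 1 \<le> ?lam"
  have "0 \<le> ?lam"
    using eq lamH_nonneg by auto
  then have "1 - exp (- 1) < pH"
    using eq small accept_gt_one_minus_exp_minus_1[of ?lam] by auto
  moreover have "0 < v"
    using one_le_exp_ratio v by linarith
  ultimately have "1 < v * pH"
    using one_le_mult_one_minus_exp_minus_1[OF v] by (smt (verit) mult_strict_left_mono)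
  moreover have "UH v K pH pL 0 \<le> 1" "v * pH \<le> UH v K pH pL 1"
    using eq UH_0_le_1 UH_1_ge by auto
  ultimately have "\<not> 0 < \<sigma> 0"
    using eq K by force
  then have "\<sigma> 0 = 0"
    using eq by force
  then have "1 \<le> ?lam"
    using eq sum_le_lamH[of K \<sigma> pH] by auto
  with small show False ..
qed

text \<open>A = e^{-lam}, M = e^{-mu}, a1 = accept(q r), a2 = accept(1 - q): the right-hand side is
  welfare per n, and the last hypothesis is the low doctors' best-response condition.\<close>

lemma welfare_density_ge:
  fixes A M q r v a1 a2 :: real
  assumes "0 < A" "A \<le> exp (- 1)" "0 < M" "M \<le> 1" "0 \<le> q" "q \<le> 1" "0 < r" "1 \<le> v"
    and "0 \<le> a1" "0 \<le> a2" "1 \<le> a2 * (1 + (1 - q))"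
    and indifference: "0 < q \<longrightarrow> M * a2 \<le> v * A * a1"
  shows "v + r \<le> 2 * v * (1 - A) + (v + 1) * (A * (q * r * a1)) + (v + 1) * (r * (1 - M))
    + 2 * (r * M * ((1 - q) * a2))"
proof -
  have "exp (- 1) < (1 / 2 :: real)"
    using exp_gt_add_one_self[of 1] by (simp add: exp_minus field_simps)
  then have high: "0 \<le> v * (1 - 2 * A)"
    using assms by (intro mult_nonneg_nonneg) auto
  have "q * (M * a2) \<le> q * (v * A * a1)"
  proof (cases "q = 0")
    case False
    then show ?thesis using indifference assms by (intro mult_left_mono) auto
  qed simp
  then have "r * (q * (M * a2)) \<le> r * (q * (v * A * a1))"
    by (rule mult_left_mono) (use assms in simp)
  also have "\<dots> \<le> (v + 1) * (A * (q * r * a1))"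
    using assms by (simp add: algebra_simps mult_nonneg_nonneg)
  finally have low_in_high: "r * (q * (M * a2)) \<le> (v + 1) * (A * (q * r * a1))" .
  have "2 * (r * (1 - M)) \<le> (v + 1) * (r * (1 - M))"
    using assms by (intro mult_right_mono) auto
  moreover have "r * M \<le> r * M * (a2 * (1 + (1 - q)))"
    using assms by (simp add: mult_left_mono)
  moreover have "0 \<le> r * (1 - M)"
    using assms by simp
  ultimately show ?thesis
    using high low_in_high by (simp add: algebra_simps)
qed

theorem lemma4:
  fixes n K :: nat and r v q pH pL :: real and \<sigma> :: "nat \<Rightarrow> real"
  assumes "0 < r" and "v \<ge> exp 1 / (exp 1 - 1)" and "K \<ge> 1"
    and "is_equilibrium r v K \<sigma> q pH pL"
  shows "welfare n r v K \<sigma> q pH pL \<ge> exp 1 / (2 * (exp 1 - 1)) * simple_welfare n r v"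
proof -
  define lam where "lam = lamH K \<sigma> pH"
  define mu where "mu = muL r K \<sigma> pH pL"
  note eq = assms(4)[unfolded is_equilibrium_def, folded lam_def mu_def]
  have "1 \<le> lam"
    unfolding lam_def using is_equilibrium_lamH_ge_1 assms by blast
  moreover have "0 \<le> mu"
    unfolding mu_def using muL_nonneg assms(1) eq by auto
  moreover have "1 \<le> v"
    using one_le_exp_ratio assms(2) by linarith
  ultimately have density: "v + r \<le> 2 * v * (1 - exp (- lam))
      + (v + 1) * (exp (- lam) * (q * r * accept (q * r))) + (v + 1) * (r * (1 - exp (- mu)))
      + 2 * (r * exp (- mu) * ((1 - q) * accept (1 - q)))"
    using eq assms(1) accept_mult_one_plus_ge_1[of "1 - q"]
    by (intro welfare_density_ge) (auto simp: accept_nonneg accLL_def accLH_def)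
  have "welfare n r v K \<sigma> q pH pL = real n * (2 * v * (1 - exp (- lam))
      + (v + 1) * (exp (- lam) * (q * r * accept (q * r))) + (v + 1) * (r * (1 - exp (- mu)))
      + 2 * (r * exp (- mu) * ((1 - q) * accept (1 - q))))"
    unfolding welfare_def Let_def lam_def[symmetric] mu_def[symmetric]
    using eq assms(1) one_minus_exp_minus_eq_mult_accept[of "q * r"]
      one_minus_exp_minus_eq_mult_accept[of "1 - q"]
    by (simp add: mult.assoc)
  moreover have "exp 1 / (2 * (exp 1 - 1)) * simple_welfare n r v = real n * (v + r)"
    unfolding simple_welfare_def by (simp add: exp_minus field_simps)
  ultimately show ?thesis
    using density by (simp add: mult_left_mono)
qed

end
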